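(* Let $n\ge1$, $\delta>0$, and $\hat r\in\mathbb R^n$ with $\hat r_1>\hat r_2>\cdots>\hat r_n$. Let $t_i=\phi(\hat r_i)$, $i=1,\dots,n$, for some increasing function $\phi:\mathbb R\to\mathbb R$. Let $$\pi^{\mathrm{DRO}}(\delta)\in\arg\max_{\pi\in\Delta_n}\{\langle\pi,\hat r\rangle-\delta\|\pi\|_\infty\},\qquad \pi^{\mathrm{DRRO}}(\delta)\in\arg\max_{\pi\in\Delta_n}\{\langle\pi,\hat r\rangle-\max_i(\hat r_i-\delta\pi_i)\}.$$ Then $\sum_{i=1}^n\pi_i^{\mathrm{DRRO}}(\delta)\,t_i\ge\sum_{i=1}^n\pi_i^{\mathrm{DRO}}(\delta)\,t_i$. If $\phi$ is strictly increasing and the two optimizers differ, the inequality is strict.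
   Context: $\Delta_n$ is the probability simplex in $\mathbb R^n$; $\|\pi\|_\infty=\max_i|\pi_i|$. The first problem is the promptwise distributionally robust (worst-case value) problem under $\ell_1$ reward ambiguity of radius $\delta$; the second is equivalent to the promptwise worst-case regret problem under the same ambiguity. *)

theory Defs
  imports Complex_Main
begin

(* Vectors in R^n are functions nat => real; coordinate i (1-based in the paper)
   is index i-1 here, i.e. indices range over {..<n}. *)

definition simplex :: "nat \<Rightarrow> (nat \<Rightarrow> real) set" where
  "simplex n = {p. (\<forall>i<n. 0 \<le> p i) \<and> (\<forall>i\<ge>n. p i = 0) \<and> (\<Sum>i<n. p i) = 1}"

definition inner_n :: "nat \<Rightarrow> (nat \<Rightarrow> real) \<Rightarrow> (nat \<Rightarrow> real) \<Rightarrow> real" where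
  "inner_n n p r = (\<Sum>i<n. p i * r i)"

definition linf_norm :: "nat \<Rightarrow> (nat \<Rightarrow> real) \<Rightarrow> real" where
  "linf_norm n p = Max ((\<lambda>i. \<bar>p i\<bar>) ` {..<n})"

definition dro_obj :: "nat \<Rightarrow> real \<Rightarrow> (nat \<Rightarrow> real) \<Rightarrow> (nat \<Rightarrow> real) \<Rightarrow> real" where
  "dro_obj n \<delta> r p = inner_n n p r - \<delta> * linf_norm n p"

definition drro_obj :: "nat \<Rightarrow> real \<Rightarrow> (nat \<Rightarrow> real) \<Rightarrow> (nat \<Rightarrow> real) \<Rightarrow> real" where
  "drro_obj n \<delta> r p = inner_n n p r - Max ((\<lambda>i. r i - \<delta> * p i) ` {..<n})"

definition is_argmax_on :: "('a \<Rightarrow> real) \<Rightarrow> 'a set \<Rightarrow> 'a \<Rightarrow> bool" where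
  "is_argmax_on f S x \<longleftrightarrow> x \<in> S \<and> (\<forall>y\<in>S. f y \<le> f x)"

end

(*
  Write gap r m = sum_{i<m} (r i - r m). At a DRRO optimizer all positive weights except the
  first lie on a common level r i - delta * p i (otherwise moving mass to the top index pays),
  so the weights are nonincreasing and the last positive index J has gap r J < delta.
  Comparing any DRO optimizer with the uniform distribution on the top J + 1 indices then
  bounds its largest weight by 1 / (J + 1). Hence every prefix sum of the DRO optimizer is at
  most min 1 (m / (J + 1)), which is at most the corresponding prefix sum of the DRRO optimizer:
  the DRRO optimizer dominates in the first-order stochastic sense along the ranking, and
  summation by parts against the nonincreasing values phi (r i) gives the claim.
*)
theory Submission
  imports Defs
begin

lemma sum_lessThan_if_less:
  fixes k n :: nat
  assumes "k \<le> n"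
  shows "(\<Sum>i<n. if i < k then f i else 0) = (\<Sum>i<k. f i)"
  using assms by (intro sum.mono_neutral_cong_right) auto

lemma sum_mult_transfer:
  fixes p w :: "nat \<Rightarrow> real"
  assumes "i < n" "j < n"
  shows "(\<Sum>l<n. (p l - (if l = i then e else 0) + (if l = j then e else 0)) * w l)
    = (\<Sum>l<n. p l * w l) + e * (w j - w i)"
proof -
  have "(\<Sum>l<n. (if l = k then e else 0) * w l) = e * w k" if "k < n" for k
    using that by (simp add: if_distrib[of "\<lambda>x. x * _"] cong: if_cong)
  then show ?thesis
    using assms by (simp add: algebra_simps sum.distrib sum_subtractf)
qed

lemma sum_mult_by_parts:
  fixes d t :: "nat \<Rightarrow> 'a::comm_ring"
  shows "(\<Sum>i<n. d i * t i) = (\<Sum>m<n. (\<Sum>i<Suc m. d i) * (t m - t (Suc m))) + (\<Sum>i<n. d i) * t n"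
  by (induction n) (simp_all add: algebra_simps)

lemma sum_mult_diff_eq_prefix_sums:
  fixes a b t :: "nat \<Rightarrow> 'a::comm_ring"
  assumes "(\<Sum>i<n. a i) = (\<Sum>i<n. b i)"
  shows "(\<Sum>i<n. b i * t i) - (\<Sum>i<n. a i * t i)
    = (\<Sum>m<n. ((\<Sum>i<Suc m. b i) - (\<Sum>i<Suc m. a i)) * (t m - t (Suc m)))"
  using sum_mult_by_parts[of "\<lambda>i. b i - a i" t n] assms
  by (simp add: sum_subtractf left_diff_distrib)

lemma sum_mult_le_of_prefix_sums_le:
  fixes a b t :: "nat \<Rightarrow> real"
  assumes prefix: "\<And>m. m \<le> n \<Longrightarrow> (\<Sum>i<m. a i) \<le> (\<Sum>i<m. b i)"
    and total: "(\<Sum>i<n. a i) = (\<Sum>i<n. b i)"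
    and t_antimono: "\<And>i. Suc i < n \<Longrightarrow> t (Suc i) \<le> t i"
  shows "(\<Sum>i<n. a i * t i) \<le> (\<Sum>i<n. b i * t i)"
proof -
  have "0 \<le> ((\<Sum>i<Suc m. b i) - (\<Sum>i<Suc m. a i)) * (t m - t (Suc m))" if "m < n" for m
  proof (cases "Suc m = n")
    case True
    then show ?thesis using total by simp
  next
    case False
    then show ?thesis using that prefix[of "Suc m"] t_antimono[of m] by simp
  qed
  then have "0 \<le> (\<Sum>i<n. b i * t i) - (\<Sum>i<n. a i * t i)"
    unfolding sum_mult_diff_eq_prefix_sums[OF total] by (intro sum_nonneg) simp
  then show ?thesis by simp
qed

lemma sum_mult_less_of_prefix_sums_le:
  fixes a b t :: "nat \<Rightarrow> real"
  assumes prefix: "\<And>m. m \<le> n \<Longrightarrow> (\<Sum>i<m. a i) \<le> (\<Sum>i<m. b i)"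
    and total: "(\<Sum>i<n. a i) = (\<Sum>i<n. b i)"
    and t_decreasing: "\<And>i. Suc i < n \<Longrightarrow> t (Suc i) < t i"
    and differ: "i < n" "a i \<noteq> b i"
  shows "(\<Sum>i<n. a i * t i) < (\<Sum>i<n. b i * t i)"
proof -
  define f where "f m = ((\<Sum>i<Suc m. b i) - (\<Sum>i<Suc m. a i)) * (t m - t (Suc m))" for m
  have f_nonneg: "0 \<le> f m" if "m < n" for m
  proof (cases "Suc m = n")
    case True
    then show ?thesis using total by (simp add: f_def)
  next
    case False
    then show ?thesis using that prefix[of "Suc m"] t_decreasing[of m] by (simp add: f_def)
  qed
  \<comment> \<open>the prefix sums of \<open>a\<close> and \<open>b\<close> cannot agree both before and after index \<open>i\<close>\<close>
  obtain m where m: "Suc m < n" "(\<Sum>i<Suc m. a i) \<noteq> (\<Sum>i<Suc m. b i)"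
  proof (cases "(\<Sum>l<Suc i. a l) = (\<Sum>l<Suc i. b l)")
    case True
    with differ(2) have "(\<Sum>l<i. a l) \<noteq> (\<Sum>l<i. b l)" by auto
    moreover from this obtain i' where "i = Suc i'" by (cases i) auto
    ultimately show thesis using that[of i'] differ(1) by simp
  next
    case False
    with total have "Suc i \<noteq> n" by auto
    with False show thesis using that[of i] differ(1) by simp
  qed
  have "0 < f m"
    using m prefix[of "Suc m"] t_decreasing[of m] by (simp add: f_def)
  then have "0 < (\<Sum>m<n. f m)"
    using m(1) f_nonneg by (intro sum_pos2[of _ m]) auto
  then show ?thesis
    using sum_mult_diff_eq_prefix_sums[OF total, of t] by (simp add: f_def)
qed

lemma antimono_prefix_sum_proportional:
  fixes p :: "nat \<Rightarrow> real"
  assumes "m \<le> k" and p_antimono: "\<And>i j. i \<le> j \<Longrightarrow> j < k \<Longrightarrow> p j \<le> p i"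
  shows "real m * (\<Sum>i<k. p i) \<le> real k * (\<Sum>i<m. p i)"
  using assms(1) p_antimono
proof (induction k)
  case 0
  then show ?case by simp
next
  case (Suc k)
  show ?case
  proof (cases "m = Suc k")
    case False
    then have "m \<le> k" using Suc.prems(1) by simp
    have "real m * p k \<le> (\<Sum>i<m. p i)"
      using sum_bounded_below[of "{..<m}" "p k" p] \<open>m \<le> k\<close> Suc.prems(2) by simp
    moreover have "real m * (\<Sum>i<k. p i) \<le> real k * (\<Sum>i<m. p i)"
      using Suc.IH \<open>m \<le> k\<close> Suc.prems(2) by simp
    ultimately show ?thesis by (simp add: algebra_simps)
  qed simp
qed

lemma simplexD:
  assumes "p \<in> simplex n"
  shows "\<And>i. i < n \<Longrightarrow> 0 \<le> p i" and "\<And>i. n \<le> i \<Longrightarrow> p i = 0" and "(\<Sum>i<n. p i) = 1"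
  using assms by (auto simp: simplex_def)

lemma le_linf_norm: "i < n \<Longrightarrow> p i \<le> linf_norm n p"
  unfolding linf_norm_def by (rule order.trans[OF abs_ge_self]) (intro Max_ge; simp)

lemma simplex_obtain_last_positive:
  assumes "p \<in> simplex n"
  obtains J where "J < n" "0 < p J" "\<And>j. J < j \<Longrightarrow> j < n \<Longrightarrow> p j = 0"
proof -
  define S where "S = {j. j < n \<and> 0 < p j}"
  have "S \<noteq> {}"
  proof
    assume "S = {}"
    then have "\<And>i. i < n \<Longrightarrow> p i = 0"
      using simplexD(1)[OF assms] by (force simp: S_def)
    then show False using simplexD(3)[OF assms] by simp
  qed
  moreover have "finite S" by (simp add: S_def)
  ultimately have "Max S \<in> S" and above: "\<And>j. j \<in> S \<Longrightarrow> j \<le> Max S" by simp_all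
  show thesis
  proof (rule that)
    show "Max S < n" "0 < p (Max S)" using \<open>Max S \<in> S\<close> by (simp_all add: S_def)
  next
    fix j assume "Max S < j" "j < n"
    then have "j \<notin> S" using above[of j] by linarith
    then show "p j = 0" using simplexD(1)[OF assms, of j] \<open>j < n\<close> by (simp add: S_def)
  qed
qed

lemma prefix_sum_le_linf_norm:
  assumes "p \<in> simplex n" "m \<le> n"
  shows "(\<Sum>i<m. p i) \<le> min 1 (real m * linf_norm n p)"
proof -
  have "(\<Sum>i<m. p i) \<le> (\<Sum>i<n. p i)"
    using assms simplexD(1)[OF assms(1)] by (intro sum_mono2) auto
  moreover have "(\<Sum>i<m. p i) \<le> of_nat (card {..<m}) * linf_norm n p"
    using assms(2) by (intro sum_bounded_above le_linf_norm) auto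
  ultimately show ?thesis using simplexD(3)[OF assms(1)] by simp
qed

lemma prefix_sum_ge_antimono:
  assumes "q \<in> simplex n" "m \<le> n" "0 < k" "k \<le> n"
    and q_antimono: "\<And>i j. i \<le> j \<Longrightarrow> j < n \<Longrightarrow> q j \<le> q i"
    and q_support: "\<And>j. k \<le> j \<Longrightarrow> q j = 0"
  shows "min 1 (real m / real k) \<le> (\<Sum>i<m. q i)"
proof -
  have prefix_eq: "(\<Sum>i<l. q i) = (\<Sum>i<k. q i)" if "k \<le> l" for l
    using that q_support by (intro sum.mono_neutral_right) auto
  then have total: "(\<Sum>i<k. q i) = 1"
    using assms(4) simplexD(3)[OF assms(1)] by metis
  show ?thesis
  proof (cases "k \<le> m")
    case True
    then show ?thesis using prefix_eq total by simp
  next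
    case False
    then have "real m * (\<Sum>i<k. q i) \<le> real k * (\<Sum>i<m. q i)"
      using assms(4) q_antimono by (intro antimono_prefix_sum_proportional) auto
    then have "real m / real k \<le> (\<Sum>i<m. q i)"
      using total assms(3) by (simp add: pos_divide_le_eq mult.commute)
    then show ?thesis by simp
  qed
qed

definition gap :: "(nat \<Rightarrow> real) \<Rightarrow> nat \<Rightarrow> real" where
  "gap r m = (\<Sum>i<m. r i - r m)"

definition top_uniform :: "nat \<Rightarrow> nat \<Rightarrow> real" where
  "top_uniform k i = (if i < k then 1 / real k else 0)"

lemma top_uniform_in_simplex:
  assumes "0 < k" "k \<le> n"
  shows "top_uniform k \<in> simplex n"
  using assms by (simp add: simplex_def top_uniform_def sum_lessThan_if_less)

lemma linf_norm_top_uniform: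
  assumes "0 < k" "k \<le> n"
  shows "linf_norm n (top_uniform k) = 1 / real k"
  unfolding linf_norm_def
proof (rule Max_eqI)
  show "1 / real k \<in> (\<lambda>i. \<bar>top_uniform k i\<bar>) ` {..<n}"
    using assms by (force simp: top_uniform_def)
qed (auto simp: top_uniform_def)

lemma inner_n_top_uniform:
  assumes "k \<le> n"
  shows "inner_n n (top_uniform k) r = (\<Sum>i<k. r i) / real k"
proof -
  have "inner_n n (top_uniform k) r = (\<Sum>i<n. if i < k then r i / real k else 0)"
    unfolding inner_n_def top_uniform_def by (intro sum.cong) auto
  then show ?thesis using assms by (simp add: sum_lessThan_if_less sum_divide_distrib)
qed

lemma dro_obj_top_uniform:
  assumes "m < n"
  shows "dro_obj n \<delta> r (top_uniform (Suc m)) = r m + (gap r m - \<delta>) / real (Suc m)"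
proof -
  define s where "s = real (Suc m)"
  have "s \<noteq> 0" by (simp add: s_def)
  have sum_eq: "(\<Sum>i<Suc m. r i) = s * r m + gap r m"
    unfolding gap_def s_def by (simp add: sum_subtractf algebra_simps)
  have "dro_obj n \<delta> r (top_uniform (Suc m)) = (\<Sum>i<Suc m. r i) / s - \<delta> * (1 / s)"
    unfolding dro_obj_def s_def using Suc_leI[OF assms]
    by (simp only: inner_n_top_uniform linf_norm_top_uniform zero_less_Suc)
  also have "\<dots> = r m + (gap r m - \<delta>) / s"
    unfolding sum_eq using \<open>s \<noteq> 0\<close> by (simp add: field_simps)
  finally show ?thesis by (simp only: s_def)
qed

lemma dro_obj_le_gap:
  assumes "p \<in> simplex n" "m < n"
    and r_antimono: "\<And>i j. i \<le> j \<Longrightarrow> j < n \<Longrightarrow> r j \<le> r i"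
  shows "dro_obj n \<delta> r p \<le> r m + linf_norm n p * (gap r m - \<delta>)"
proof -
  have "inner_n n p r = r m + (\<Sum>i<n. p i * (r i - r m))"
    using simplexD(3)[OF assms(1)]
    by (simp add: inner_n_def algebra_simps sum_subtractf sum_distrib_right[symmetric])
  also have "\<dots> \<le> r m + (\<Sum>i<n. if i < m then linf_norm n p * (r i - r m) else 0)"
  proof -
    have "p i * (r i - r m) \<le> (if i < m then linf_norm n p * (r i - r m) else 0)" if "i < n" for i
      using le_linf_norm[OF that, of p] simplexD(1)[OF assms(1) that] r_antimono[of i m]
        r_antimono[of m i] assms(2) that
      by (auto intro: mult_right_mono mult_nonneg_nonpos)
    then show ?thesis by (intro add_left_mono sum_mono) simp
  qed
  also have "\<dots> = r m + linf_norm n p * gap r m"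
    using assms(2) by (simp add: gap_def sum_lessThan_if_less sum_distrib_left)
  finally show ?thesis by (simp add: dro_obj_def algebra_simps)
qed

lemma dro_argmax_linf_norm_le:
  assumes opt: "is_argmax_on (dro_obj n \<delta> r) (simplex n) p"
    and "m < n" "gap r m < \<delta>"
    and r_antimono: "\<And>i j. i \<le> j \<Longrightarrow> j < n \<Longrightarrow> r j \<le> r i"
  shows "real (Suc m) * linf_norm n p \<le> 1"
proof (rule ccontr)
  have p_simplex: "p \<in> simplex n" using opt by (simp add: is_argmax_on_def)
  assume "\<not> ?thesis"
  then have "1 / real (Suc m) < linf_norm n p"
    by (simp add: pos_divide_less_eq mult.commute del: of_nat_Suc)
  then have "linf_norm n p * (gap r m - \<delta>) < (gap r m - \<delta>) / real (Suc m)"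
    using mult_strict_right_mono_neg[of _ _ "gap r m - \<delta>"] \<open>gap r m < \<delta>\<close> by fastforce
  moreover have "dro_obj n \<delta> r p \<le> r m + linf_norm n p * (gap r m - \<delta>)"
    using p_simplex \<open>m < n\<close> r_antimono by (rule dro_obj_le_gap)
  ultimately have "dro_obj n \<delta> r p < dro_obj n \<delta> r (top_uniform (Suc m))"
    using dro_obj_top_uniform[OF \<open>m < n\<close>] by simp
  moreover have "top_uniform (Suc m) \<in> simplex n"
    using \<open>m < n\<close> by (intro top_uniform_in_simplex) auto
  ultimately show False using opt by (force simp: is_argmax_on_def)
qed

context
  fixes n :: nat and \<delta> :: real and r p :: "nat \<Rightarrow> real"
  assumes \<delta>_pos: "0 < \<delta>"
    and r_decreasing: "\<And>i j. i < j \<Longrightarrow> j < n \<Longrightarrow> r j < r i"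
    and p_opt: "is_argmax_on (drro_obj n \<delta> r) (simplex n) p"
begin

lemma drro_argmax_level:
  assumes "i \<noteq> 0" "i < n" "0 < p i"
  shows "r i - \<delta> * p i = Max ((\<lambda>l. r l - \<delta> * p l) ` {..<n})"
proof (rule ccontr)
  define c where "c = Max ((\<lambda>l. r l - \<delta> * p l) ` {..<n})"
  have p_simplex: "p \<in> simplex n"
    and best: "\<And>q. q \<in> simplex n \<Longrightarrow> drro_obj n \<delta> r q \<le> drro_obj n \<delta> r p"
    using p_opt by (auto simp: is_argmax_on_def)
  have c_ge: "r l - \<delta> * p l \<le> c" if "l < n" for l
    unfolding c_def using that by (intro Max_ge) auto
  assume "r i - \<delta> * p i \<noteq> Max ((\<lambda>l. r l - \<delta> * p l) ` {..<n})"
  then have slack: "r i - \<delta> * p i < c" using c_ge[OF assms(2)] by (simp add: c_def)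
  define e where "e = min (p i) ((c - (r i - \<delta> * p i)) / \<delta>)"
  have "0 < e" using slack assms(3) \<delta>_pos by (simp add: e_def)
  have "e \<le> p i" by (simp add: e_def)
  have "e \<le> (c - (r i - \<delta> * p i)) / \<delta>" by (simp add: e_def)
  then have "\<delta> * e \<le> c - (r i - \<delta> * p i)"
    using \<delta>_pos by (simp add: pos_le_divide_eq mult.commute)
  \<comment> \<open>moving \<open>e\<close> from \<open>i\<close> to the top index raises the inner product, and \<open>e\<close> is small
    enough that neither affected level exceeds the maximum \<open>c\<close>\<close>
  define q where "q = (\<lambda>l. p l - (if l = i then e else 0) + (if l = 0 then e else 0))"
  have "q \<in> simplex n"
    using simplexD[OF p_simplex] sum_mult_transfer[OF assms(2), of 0 p e "\<lambda>_. 1"]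
      \<open>0 < e\<close> \<open>e \<le> p i\<close> assms(1,2)
    by (force simp: simplex_def q_def)
  moreover have "Max ((\<lambda>l. r l - \<delta> * q l) ` {..<n}) \<le> c"
  proof -
    have "r l - \<delta> * q l \<le> c" if "l < n" for l
      using c_ge[OF that] assms(1) mult_pos_pos[OF \<delta>_pos \<open>0 < e\<close>] \<open>\<delta> * e \<le> c - (r i - \<delta> * p i)\<close>
      by (auto simp: q_def algebra_simps)
    then show ?thesis using assms(2) by (subst Max_le_iff) auto
  qed
  moreover have "inner_n n q r = inner_n n p r + e * (r 0 - r i)"
    unfolding inner_n_def q_def using assms(2) by (intro sum_mult_transfer) auto
  moreover have "0 < e * (r 0 - r i)"
    using \<open>0 < e\<close> r_decreasing[of 0 i] assms by simp
  ultimately have "drro_obj n \<delta> r p < drro_obj n \<delta> r q"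
    by (simp add: drro_obj_def c_def)
  with best[OF \<open>q \<in> simplex n\<close>] show False by simp
qed

lemma drro_argmax_antimono:
  assumes "i < j" "j < n"
  shows "p j \<le> p i"
proof (cases "0 < p j")
  case True
  have "r i - \<delta> * p i \<le> Max ((\<lambda>l. r l - \<delta> * p l) ` {..<n})"
    using assms by (intro Max_ge) auto
  also have "\<dots> = r j - \<delta> * p j"
    using assms True by (intro drro_argmax_level[symmetric]) auto
  finally have "\<delta> * p j < \<delta> * p i" using r_decreasing[OF assms] by linarith
  then show ?thesis using \<delta>_pos by simp
next
  case False
  then show ?thesis
    using p_opt simplexD(1)[of p n i] assms by (simp add: is_argmax_on_def)
qed

lemma drro_argmax_gap_less:
  assumes "j < n" "0 < p j"
  shows "gap r j < \<delta>"
proof (cases "j = 0")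
  case True
  then show ?thesis using \<delta>_pos by (simp add: gap_def)
next
  case False
  define c where "c = Max ((\<lambda>l. r l - \<delta> * p l) ` {..<n})"
  have p_simplex: "p \<in> simplex n" using p_opt by (simp add: is_argmax_on_def)
  have c_j: "r j - \<delta> * p j = c"
    unfolding c_def using False assms by (rule drro_argmax_level)
  have c_ge: "r l - \<delta> * p l \<le> c" if "l < n" for l
    unfolding c_def using that by (intro Max_ge) auto
  have "gap r j + real (Suc j) * (r j - c) = (\<Sum>l<Suc j. r l - c)"
    unfolding gap_def by (simp add: sum_subtractf algebra_simps)
  also have "\<dots> \<le> (\<Sum>l<Suc j. \<delta> * p l)"
  proof (rule sum_mono)
    fix l assume "l \<in> {..<Suc j}"
    then show "r l - c \<le> \<delta> * p l" using c_ge[of l] assms(1) by simp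
  qed
  also have "\<dots> \<le> \<delta> * (\<Sum>l<n. p l)"
    unfolding sum_distrib_left[symmetric] using assms(1) \<delta>_pos simplexD(1)[OF p_simplex]
    by (intro mult_left_mono sum_mono2) auto
  finally have "gap r j + real (Suc j) * (r j - c) \<le> \<delta>"
    using simplexD(3)[OF p_simplex] by simp
  moreover have "0 < real (Suc j) * (r j - c)"
    unfolding c_j[symmetric] using assms(2) \<delta>_pos by simp
  ultimately show ?thesis by linarith
qed

end

lemma drro_argmax_prefix_sums_ge_dro_argmax:
  assumes \<delta>_pos: "0 < \<delta>" and r_decreasing: "\<And>i j. i < j \<Longrightarrow> j < n \<Longrightarrow> r j < r i"
    and dro: "is_argmax_on (dro_obj n \<delta> r) (simplex n) p"
    and drro: "is_argmax_on (drro_obj n \<delta> r) (simplex n) q"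
    and "m \<le> n"
  shows "(\<Sum>i<m. p i) \<le> (\<Sum>i<m. q i)"
proof -
  have p_simplex: "p \<in> simplex n" and q_simplex: "q \<in> simplex n"
    using dro drro by (simp_all add: is_argmax_on_def)
  obtain J where J: "J < n" "0 < q J" and beyond_J: "\<And>j. J < j \<Longrightarrow> j < n \<Longrightarrow> q j = 0"
    using simplex_obtain_last_positive[OF q_simplex] by blast
  have r_antimono: "r j \<le> r i" if "i \<le> j" "j < n" for i j
    using r_decreasing[of i j] that by (cases "i = j") auto
  have q_antimono: "q j \<le> q i" if "i \<le> j" "j < n" for i j
  proof (cases "i = j")
    case False
    with \<open>i \<le> j\<close> have "i < j" by simp
    with \<delta>_pos r_decreasing drro show ?thesis using \<open>j < n\<close> by (rule drro_argmax_antimono)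
  qed simp
  have q_support: "q j = 0" if "Suc J \<le> j" for j
    using beyond_J[of j] simplexD(2)[OF q_simplex, of j] that by (cases "j < n") auto
  have "gap r J < \<delta>"
    using \<delta>_pos r_decreasing drro J by (rule drro_argmax_gap_less)
  with dro J(1) r_antimono have "real (Suc J) * linf_norm n p \<le> 1"
    by (intro dro_argmax_linf_norm_le)
  then have "real m * linf_norm n p \<le> real m / real (Suc J)"
    by (simp add: le_divide_eq mult.commute mult.left_commute mult_left_le del: of_nat_Suc)
  then have "(\<Sum>i<m. p i) \<le> min 1 (real m / real (Suc J))"
    using prefix_sum_le_linf_norm[OF p_simplex \<open>m \<le> n\<close>] by linarith
  also have "\<dots> \<le> (\<Sum>i<m. q i)"
    using q_simplex \<open>m \<le> n\<close> zero_less_Suc Suc_leI[OF J(1)] q_antimono q_support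
    by (rule prefix_sum_ge_antimono)
  finally show ?thesis .
qed

theorem mainTheorem12:
  fixes n :: nat and \<delta> :: real and r :: "nat \<Rightarrow> real" and \<phi> :: "real \<Rightarrow> real"
    and pDRO pDRRO :: "nat \<Rightarrow> real"
  assumes "n \<ge> 1" and "\<delta> > 0"
    and "\<And>i j. i < j \<Longrightarrow> j < n \<Longrightarrow> r i > r j"
    and "mono \<phi>"
    and "is_argmax_on (dro_obj n \<delta> r) (simplex n) pDRO"
    and "is_argmax_on (drro_obj n \<delta> r) (simplex n) pDRRO"
  shows "(\<Sum>i<n. pDRRO i * \<phi> (r i)) \<ge> (\<Sum>i<n. pDRO i * \<phi> (r i))
         \<and> (strict_mono \<phi> \<longrightarrow> pDRRO \<noteq> pDRO \<longrightarrow>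
           (\<Sum>i<n. pDRRO i * \<phi> (r i)) > (\<Sum>i<n. pDRO i * \<phi> (r i)))"
proof -
  have DRO_simplex: "pDRO \<in> simplex n" and DRRO_simplex: "pDRRO \<in> simplex n"
    using assms(5,6) by (simp_all add: is_argmax_on_def)
  have prefix: "(\<Sum>i<m. pDRO i) \<le> (\<Sum>i<m. pDRRO i)" if "m \<le> n" for m
    using assms(2,3,5,6) that by (rule drro_argmax_prefix_sums_ge_dro_argmax)
  have total: "(\<Sum>i<n. pDRO i) = (\<Sum>i<n. pDRRO i)"
    using simplexD(3)[OF DRO_simplex] simplexD(3)[OF DRRO_simplex] by simp
  have "\<phi> (r (Suc i)) \<le> \<phi> (r i)" if "Suc i < n" for i
    using assms(3)[of i "Suc i"] assms(4) that by (simp add: monoD)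
  with prefix total have "(\<Sum>i<n. pDRO i * \<phi> (r i)) \<le> (\<Sum>i<n. pDRRO i * \<phi> (r i))"
    by (rule sum_mult_le_of_prefix_sums_le)
  moreover have "(\<Sum>i<n. pDRO i * \<phi> (r i)) < (\<Sum>i<n. pDRRO i * \<phi> (r i))"
    if "strict_mono \<phi>" and "pDRRO \<noteq> pDRO"
  proof -
    obtain i where "i < n" "pDRO i \<noteq> pDRRO i"
      using \<open>pDRRO \<noteq> pDRO\<close> simplexD(2)[OF DRO_simplex] simplexD(2)[OF DRRO_simplex]
      by (metis ext not_le)
    moreover have "\<phi> (r (Suc i)) < \<phi> (r i)" if "Suc i < n" for i
      using assms(3)[of i "Suc i"] \<open>strict_mono \<phi>\<close> that by (simp add: strict_monoD)
    ultimately show ?thesis using prefix total by (intro sum_mult_less_of_prefix_sums_le)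
  qed
  ultimately show ?thesis by auto
qed

end
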